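(* Let $M\subset X$ be nonempty, $F:X\rightrightarrows Y$ with nonempty values, and $\bar x\in M\cap M'$ such that $F(\bar x)$ is $K$-sequentially compact and $\bar x$ is an ideal minimum for $F$ on $M$. Suppose there are $e\in K\setminus\{0\}$ and $\ell>0$ such that for all $u\in X\setminus M$ and $v\in M$, $$F(u)+\ell\|u-v\|e\subset F(v)+K.$$ Then $\bar x$ is an ideal minimum on $X$ for the set-valued map $G:X\rightrightarrows Y$, $G(x)=F(x)+\ell d_M(x)e$.
   Context: $X,Y$ are real normed spaces, $K\subset Y$ a pointed closed convex cone, $M'$ the set of accumulation points of $M$, $d_M(x)=\inf_{m\in M}\|x-m\|$. A nonempty $A\subset Y$ is $K$-sequentially compact if for every $(a_n)\subset A$ there is $(c_n)\subset K$ such that $(a_n-c_n)$ has a subsequence converging to an element of $A$. For nonempty $S\subset X$, $\bar x\in S$ is an ideal minimum for $F$ on $S$ if $F(\bar x)\not\subset F(x)+(Y\setminus -K)$ for all $x\in S\setminus\{\bar x\}$; "on $X$" means $S=X$. *)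

theory Defs
  imports "HOL-Analysis.Analysis"
begin

definition msum :: "'a::real_normed_vector set \<Rightarrow> 'a set \<Rightarrow> 'a set" where
  "msum A B = {a + b | a b. a \<in> A \<and> b \<in> B}"

definition pointed_closed_convex_cone :: "'a::real_normed_vector set \<Rightarrow> bool" where
  "pointed_closed_convex_cone K \<longleftrightarrow> convex_cone K \<and> closed K \<and> K \<inter> uminus ` K = {0}"

definition K_seq_compact :: "'a::real_normed_vector set \<Rightarrow> 'a set \<Rightarrow> bool" where
  "K_seq_compact K A \<longleftrightarrow> A \<noteq> {} \<and>
     (\<forall>a::nat \<Rightarrow> 'a. (\<forall>n. a n \<in> A) \<longrightarrow>
        (\<exists>c::nat \<Rightarrow> 'a. (\<forall>n. c n \<in> K) \<and>
           (\<exists>(r::nat \<Rightarrow> nat) y. strict_mono r \<and> y \<in> A \<and> ((\<lambda>n. a (r n) - c (r n)) \<longlonglongrightarrow> y))))"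

definition ideal_min :: "'b::real_normed_vector set \<Rightarrow> ('a \<Rightarrow> 'b set) \<Rightarrow> 'a set \<Rightarrow> 'a \<Rightarrow> bool" where
  "ideal_min K F S xb \<longleftrightarrow> xb \<in> S \<and>
     (\<forall>x \<in> S - {xb}. \<not> (F xb \<subseteq> msum (F x) (UNIV - uminus ` K)))"

end

theory Submission
  imports Defs
begin

text \<open>
  \<open>F xb \<not>\<subseteq> F x + (Y \<setminus> -K)\<close> means that some \<open>y \<in> F xb\<close> is a \<open>K\<close>-lower bound of \<open>F x\<close>.
  For \<open>x \<in> M\<close> this is given; for \<open>x \<notin> M\<close> pick \<open>v\<^sub>n \<in> M \<setminus> {xb}\<close> with
  \<open>\<parallel>x - v\<^sub>n\<parallel> \<rightarrow> d\<^sub>M(x)\<close> (possible since \<open>xb\<close> is an accumulation point of \<open>M\<close>).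
  Lower bounds \<open>y\<^sub>n \<in> F xb\<close> of \<open>F v\<^sub>n\<close> are, by the inclusion hypothesis, lower bounds of
  \<open>F x + \<ell>\<parallel>x - v\<^sub>n\<parallel>e\<close>; \<open>K\<close>-sequential compactness of \<open>F xb\<close> and closedness of \<open>K\<close>
  let them pass to a single lower bound of \<open>G x = F x + \<ell> d\<^sub>M(x) e\<close>.
\<close>

definition K_lower_bound :: "'a::real_normed_vector set \<Rightarrow> 'a \<Rightarrow> 'a set \<Rightarrow> bool" where
  "K_lower_bound K y B \<longleftrightarrow> (\<forall>z\<in>B. z - y \<in> K)"

lemma in_image_uminus_iff: "a \<in> uminus ` K \<longleftrightarrow> - a \<in> (K :: 'a::ab_group_add set)"
  by (metis image_eqI minus_minus imageE)

lemma not_subset_msum_compl_uminus_iff: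
  "\<not> A \<subseteq> msum B (UNIV - uminus ` K) \<longleftrightarrow> (\<exists>y\<in>A. K_lower_bound K y B)"
proof -
  have "y \<in> msum B (UNIV - uminus ` K) \<longleftrightarrow> \<not> K_lower_bound K y B" for y
  proof -
    have "y \<in> msum B (UNIV - uminus ` K) \<longleftrightarrow> (\<exists>z\<in>B. y - z \<notin> uminus ` K)"
      unfolding msum_def by (auto, metis add_diff_cancel_left', metis add.commute diff_add_cancel)
    also have "\<dots> \<longleftrightarrow> (\<exists>z\<in>B. z - y \<notin> K)"
      by (simp add: in_image_uminus_iff)
    finally show ?thesis unfolding K_lower_bound_def by blast
  qed
  then show ?thesis by blast
qed

lemma ideal_min_iff_K_lower_bound:
  "ideal_min K F S xb \<longleftrightarrow> xb \<in> S \<and> (\<forall>x\<in>S - {xb}. \<exists>y\<in>F xb. K_lower_bound K y (F x))"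
  unfolding ideal_min_def not_subset_msum_compl_uminus_iff ..

lemma K_lower_bound_msum_singleton:
  "K_lower_bound K y (msum B {c}) \<longleftrightarrow> (\<forall>z\<in>B. z + c - y \<in> K)"
  unfolding K_lower_bound_def msum_def by blast

lemma msum_zero_right [simp]: "msum A {0} = A"
  unfolding msum_def by simp

lemma K_lower_bound_subset_msum:
  assumes "convex_cone K" "A \<subseteq> msum B K" "K_lower_bound K y B"
  shows "K_lower_bound K y A"
  unfolding K_lower_bound_def
proof
  fix a assume "a \<in> A"
  then obtain b k where "b \<in> B" "k \<in> K" "a = b + k"
    using assms(2) unfolding msum_def by blast
  then have "a - y = (b - y) + k" by simp
  then show "a - y \<in> K"
    using convex_cone_add[OF assms(1)] assms(3) \<open>b \<in> B\<close> \<open>k \<in> K\<close>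
    unfolding K_lower_bound_def by metis
qed

text \<open>
  A lower bound from the \<open>K\<close>-sequentially compact set \<open>A\<close> survives a limit: the correction
  terms \<open>c\<^sub>n \<in> K\<close> are absorbed by the cone, and the limit stays in \<open>K\<close> since it is closed.
\<close>
lemma K_seq_compact_lower_bound_limit:
  assumes cone: "convex_cone K" and closed: "closed K"
    and compact: "K_seq_compact K A"
    and ys: "\<And>n. ys n \<in> A"
    and bound: "\<And>z n. z \<in> B \<Longrightarrow> w z n - ys n \<in> K"
    and lim: "\<And>z. z \<in> B \<Longrightarrow> w z \<longlonglongrightarrow> w0 z"
  shows "\<exists>y\<in>A. \<forall>z\<in>B. w0 z - y \<in> K"
proof -
  obtain c r y where c: "\<And>n. c n \<in> K" and r: "strict_mono r" and "y \<in> A"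
    and y: "(\<lambda>n. ys (r n) - c (r n)) \<longlonglongrightarrow> y"
    using compact ys unfolding K_seq_compact_def by metis
  have "w0 z - y \<in> K" if z: "z \<in> B" for z
  proof -
    have inK: "(w z (r n) - ys (r n)) + c (r n) \<in> K" for n
      using convex_cone_add[OF cone bound[OF z] c] .
    have "(\<lambda>n. w z (r n)) \<longlonglongrightarrow> w0 z"
      using LIMSEQ_subseq_LIMSEQ[OF lim[OF z] r] by (simp add: o_def)
    from tendsto_diff[OF this y]
    have "(\<lambda>n. (w z (r n) - ys (r n)) + c (r n)) \<longlonglongrightarrow> w0 z - y"
      by (simp add: algebra_simps)
    then show ?thesis
      using closed_sequentially[OF closed, of "\<lambda>n. (w z (r n) - ys (r n)) + c (r n)"] inK
      by blast
  qed
  with \<open>y \<in> A\<close> show ?thesis by blast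
qed

lemma K_lower_bound_msum_scaleR_limit:
  assumes cone: "convex_cone K" and closed: "closed K"
    and compact: "K_seq_compact K A"
    and lower: "\<And>n. \<exists>y\<in>A. K_lower_bound K y (msum B {s n *\<^sub>R e})"
    and s: "s \<longlonglongrightarrow> t"
  shows "\<exists>y\<in>A. K_lower_bound K y (msum B {t *\<^sub>R e})"
proof -
  obtain ys where ys: "\<And>n. ys n \<in> A"
    and ys_lower: "\<And>n. K_lower_bound K (ys n) (msum B {s n *\<^sub>R e})"
    using lower by metis
  have bound: "z + s n *\<^sub>R e - ys n \<in> K" if "z \<in> B" for z n
    using ys_lower that unfolding K_lower_bound_msum_singleton by blast
  have lim: "(\<lambda>n. z + s n *\<^sub>R e) \<longlonglongrightarrow> z + t *\<^sub>R e" for z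
    using s by (intro tendsto_intros)
  show ?thesis
    using K_seq_compact_lower_bound_limit[OF cone closed compact ys bound lim]
    unfolding K_lower_bound_msum_singleton .
qed

lemma infdist_as_limit:
  fixes x :: "'a::metric_space"
  assumes "A \<noteq> {}"
  obtains v where "\<And>n. v n \<in> A" "(\<lambda>n. dist x (v n)) \<longlonglongrightarrow> infdist x A"
proof -
  have "bdd_below (dist x ` A)"
    by (rule bdd_belowI[of _ 0]) auto
  then have "infdist x A \<in> closure (dist x ` A)"
    using assms by (simp add: infdist_notempty closure_contains_Inf)
  then obtain d where d: "\<And>n. d n \<in> dist x ` A" and "d \<longlonglongrightarrow> infdist x A"
    unfolding closure_sequential by blast
  have "\<forall>n. \<exists>a. a \<in> A \<and> d n = dist x a"
    using d by blast
  then obtain v where v: "\<And>n. v n \<in> A \<and> d n = dist x (v n)"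
    by metis
  then have "d = (\<lambda>n. dist x (v n))"
    by auto
  with v \<open>d \<longlonglongrightarrow> infdist x A\<close> show ?thesis
    using that by blast
qed

lemma infdist_remove_limit_point:
  fixes x :: "'a::metric_space"
  assumes "a islimpt M"
  shows "infdist x (M - {a}) = infdist x M"
proof -
  have "a \<in> closure (M - {a})"
    using assms by (simp add: islimpt_in_closure)
  then have "M \<subseteq> closure (M - {a})"
    using closure_subset[of "M - {a}"] by auto
  then have "closure M \<subseteq> closure (M - {a})"
    by (simp add: closure_minimal)
  moreover have "closure (M - {a}) \<subseteq> closure M"
    by (rule closure_mono) blast
  ultimately have "closure (M - {a}) = closure M"
    by (rule antisym[rotated])
  then have "setdist {x} (closure (M - {a})) = setdist {x} (closure M)"
    by simp
  then show ?thesis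
    by (simp add: infdist_eq_setdist)
qed

lemma infdist_as_limit_avoiding:
  fixes x :: "'a::metric_space"
  assumes "a islimpt M"
  obtains v where "\<And>n. v n \<in> M - {a}" "(\<lambda>n. dist x (v n)) \<longlonglongrightarrow> infdist x M"
proof -
  have "M - {a} \<noteq> {}"
    using assms by (metis islimpt_in_closure closure_empty empty_iff)
  then show ?thesis
    using that infdist_as_limit infdist_remove_limit_point[OF assms] by metis
qed

theorem mainTheorem16:
  fixes K :: "'b::real_normed_vector set"
    and M :: "'a::real_normed_vector set"
    and F :: "'a \<Rightarrow> 'b set"
    and xb :: 'a and e :: 'b and l :: real
  assumes K: "pointed_closed_convex_cone K"
    and M: "M \<noteq> {}"
    and Fne: "\<And>x. F x \<noteq> {}"
    and xbM: "xb \<in> M" and xbacc: "xb islimpt M"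
    and Fcomp: "K_seq_compact K (F xb)"
    and imin: "ideal_min K F M xb"
    and e: "e \<in> K - {0}" and l: "l > 0"
    and incl: "\<And>u v. u \<in> UNIV - M \<Longrightarrow> v \<in> M \<Longrightarrow>
                 msum (F u) {(l * norm (u - v)) *\<^sub>R e} \<subseteq> msum (F v) K"
  shows "ideal_min K (\<lambda>x. msum (F x) {(l * infdist x M) *\<^sub>R e}) UNIV xb"
proof -
  have cone: "convex_cone K" and closed: "closed K"
    using K unfolding pointed_closed_convex_cone_def by auto
  have lower: "\<exists>y\<in>F xb. K_lower_bound K y (F v)" if "v \<in> M - {xb}" for v
    using imin that unfolding ideal_min_iff_K_lower_bound by blast
  have "\<exists>y\<in>F xb. K_lower_bound K y (msum (F x) {(l * infdist x M) *\<^sub>R e})" if "x \<noteq> xb" for x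
  proof (cases "x \<in> M")
    case True
    then show ?thesis using lower[of x] that by simp
  next
    case False
    obtain v where v: "\<And>n. v n \<in> M - {xb}"
      and dist: "(\<lambda>n. dist x (v n)) \<longlonglongrightarrow> infdist x M"
      using infdist_as_limit_avoiding[OF xbacc] by metis
    have "\<exists>y\<in>F xb. K_lower_bound K y (msum (F x) {(l * norm (x - v n)) *\<^sub>R e})" for n
      using lower[OF v] incl[of x "v n"] False v K_lower_bound_subset_msum[OF cone] by blast
    moreover have "(\<lambda>n. l * norm (x - v n)) \<longlonglongrightarrow> l * infdist x M"
      using dist by (simp add: dist_norm tendsto_mult_left)
    ultimately show ?thesis
      by (rule K_lower_bound_msum_scaleR_limit[OF cone closed Fcomp])
  qed
  then show ?thesis
    unfolding ideal_min_iff_K_lower_bound using xbM by simp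
qed

end
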